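(* Let $Q$ and $W$ satisfy the standing assumptions with $W=Y$, and let $l\ge1$. If $Q$ is domino consistent, then $\hat Q^{l\triangledown}$ realizes the strongest asynchronous $l$-complete approximation, i.e. $\mathcal B(\hat Q^{l\triangledown})=\hat{\mathcal B}^l$.
   Context: Strings and signals: $\diamond$ is a symbol not in any other set considered. For a set $A$ and $l\in\mathbb N_0$, $A^l$ is the set of strings of length $l$ over $A$, indexed $\zeta=\zeta(0)\cdots\zeta(l-1)$. For a map $w$ on $\mathbb Z$ (or a string) and integers $t_1\le t_2$, $w|_{[t_1,t_2]}=w(t_1)\cdots w(t_2)$ is the string of length $t_2-t_1+1$ (absolute time forgotten). For a set $\mathcal S$ of such maps, $\mathcal S|_{[t_1,t_2]}=\{s|_{[t_1,t_2]}:s\in\mathcal S\}$. State machines: a state machine is $Q=(X,U,Y,\delta,X_0)$ with $X_0\subseteq X$, $\delta\subseteq X\times U\times Y\times X$. Let $H_\delta(x)=\{y:\exists u,x'.\,(x,u,y,x')\in\delta\}$, $F_\delta(x,u)=\{x':\exists y\in H_\delta(x).\,(x,u,y,x')\in\delta\}$. The full behavior $\mathcal B_f(Q)$ is the set of $(\mu,\nu,\xi)\in(U\times Y\times X)^{\mathbb N_0}$ with $\xi(0)\in X_0$ and $(\xi(k),\mu(k),\nu(k),\xi(k+1))\in\delta$ for all $k\in\mathbb N_0$. $Q$ is live and reachable if every $x\in X_0$ is $\xi(0)$ for some $(\mu,\nu,\xi)\in\mathcal B_f(Q)$ and every $x\in X$ is $\xi(k)$ for some such trajectory and some $k$. Standing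 assumptions: $Q=(X,U,Y,\delta,X_0)$ is live and reachable and satisfies $(x,u,y,x')\in\delta\iff(x'\in F_\delta(x,u)\wedge y\in H_\delta(x))$ for all $x,x'\in X,u\in U,y\in Y$; the external signal space $W$ is finite and either $W=U\times Y$ or $W=Y$ (here $W=Y$). Behaviors: for a state machine $Q'$ with input set $U$ and output set $Y$, $\mathcal B(Q')$ is the set of $w:\mathbb Z\to Y\cup\{\diamond\}$ such that for some $(\mu,\nu,\xi)\in\mathcal B_f(Q')$, $w(k)=\diamond$ for $k<0$ and $w(k)=\nu(k)$ for $k\ge0$. $\mathcal B_S(Q)$ is the set of pairs $(w,\xi)$ of maps on $\mathbb Z$ with $w(k)=\xi(k)=\diamond$ for $k<0$ and $(w(k),\xi(k))=(\nu(k),\xi'(k))$ for $k\ge0$, for some $(\mu,\nu,\xi')\in\mathcal B_f(Q)$. For a set $\mathcal B$ of maps on $\mathbb Z$, $\Pi_l(\mathcal B)=\bigcup_{k\in\mathbb N_0}\mathcal B|_{[k-l+1,k]}$. SAlCA: for $l\in\mathbb N_0$, $\hat{\mathcal B}^l$ is the set of $w:\mathbb Z\to W\cup\{\diamond\}$ with $w(k)=\diamond$ for $k<0$, $w(k)\in W$ for $k\ge0$, $w|_{[-l,0]}\in\mathcal B(Q)|_{[-l,0]}$ and $w|_{[k-l,k]}\in\Pi_{l+1}(\mathcal B(Q))$ for all $k\in\mathbb N_0$. Corresponding strings: for integers $a,b$ and $x\in X$, $E^{[a,b]}(x)=\{\zeta:\exists(w,\xi)\in\mathcal B_S(Q),k\in\mathbb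 N_0:\ \xi(k)=x,\ \zeta=w|_{[k+a,k+b]}\}$; $I^l_l=[0,l-1]$. Quotient state machine (for $W=Y$): $\hat Q^{l\triangledown}=(\hat X^{l\triangledown},U,Y,\hat\delta^{l\triangledown},\hat X^{l\triangledown}_0)$ with $\hat X^{l\triangledown}=\{E^{I^l_l}(x):x\in X\}$ (a set of subsets of $Y^l$), $\hat X^{l\triangledown}_0=\{E^{I^l_l}(x):x\in X_0\}$, and $(\hat x,u,y,\hat x')\in\hat\delta^{l\triangledown}$ iff there exist $x,x'\in X$ with $\hat x=E^{I^l_l}(x)$, $\hat x'=E^{I^l_l}(x')$ and $(x,u,y,x')\in\delta$. Domino consistency (for $W=Y$): $Q$ is domino consistent if for all $\zeta\in\Pi_{l+1}(\mathcal B(Q))$ and all $\hat y\in\hat X^{l\triangledown}$ with $\zeta|_{[0,l-1]}\in\hat y$ there exists $x\in X$ with $E^{I^l_l}(x)=\hat y$ and $\zeta\in E^{[0,l]}(x)$. *)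

theory Defs
  imports Main
begin

text \<open>Conventions: the symbol diamond is encoded as None; signals on Z are maps
int => 'y option; strings are lists.\<close>

record ('x,'u,'y) sm =
  sm_X  :: "'x set"
  sm_U  :: "'u set"
  sm_Y  :: "'y set"
  sm_delta :: "('x \<times> 'u \<times> 'y \<times> 'x) set"
  sm_X0 :: "'x set"

definition sm_wf :: "('x,'u,'y) sm \<Rightarrow> bool" where
  "sm_wf Q \<longleftrightarrow> sm_X0 Q \<subseteq> sm_X Q \<and>
     sm_delta Q \<subseteq> sm_X Q \<times> sm_U Q \<times> sm_Y Q \<times> sm_X Q"

definition H_delta :: "('x \<times> 'u \<times> 'y \<times> 'x) set \<Rightarrow> 'x \<Rightarrow> 'y set" where
  "H_delta \<delta> x = {y. \<exists>u x'. (x,u,y,x') \<in> \<delta>}"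

definition F_delta :: "('x \<times> 'u \<times> 'y \<times> 'x) set \<Rightarrow> 'x \<Rightarrow> 'u \<Rightarrow> 'x set" where
  "F_delta \<delta> x u = {x'. \<exists>y \<in> H_delta \<delta> x. (x,u,y,x') \<in> \<delta>}"

definition full_beh :: "('x,'u,'y) sm \<Rightarrow> ((nat \<Rightarrow> 'u) \<times> (nat \<Rightarrow> 'y) \<times> (nat \<Rightarrow> 'x)) set" where
  "full_beh Q = {(\<mu>,\<nu>,\<xi>). \<xi> 0 \<in> sm_X0 Q \<and>
     (\<forall>k. \<mu> k \<in> sm_U Q \<and> \<nu> k \<in> sm_Y Q \<and> \<xi> k \<in> sm_X Q \<and>
          (\<xi> k, \<mu> k, \<nu> k, \<xi> (Suc k)) \<in> sm_delta Q)}"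

definition live_reachable :: "('x,'u,'y) sm \<Rightarrow> bool" where
  "live_reachable Q \<longleftrightarrow>
     (\<forall>x \<in> sm_X0 Q. \<exists>\<mu> \<nu> \<xi>. (\<mu>,\<nu>,\<xi>) \<in> full_beh Q \<and> \<xi> 0 = x) \<and>
     (\<forall>x \<in> sm_X Q. \<exists>\<mu> \<nu> \<xi> k. (\<mu>,\<nu>,\<xi>) \<in> full_beh Q \<and> \<xi> k = x)"

definition standing_assumptions :: "('x,'u,'y) sm \<Rightarrow> bool" where
  "standing_assumptions Q \<longleftrightarrow> sm_wf Q \<and> live_reachable Q \<and> finite (sm_Y Q) \<and>
     (\<forall>x \<in> sm_X Q. \<forall>x' \<in> sm_X Q. \<forall>u \<in> sm_U Q. \<forall>y \<in> sm_Y Q.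
        (x,u,y,x') \<in> sm_delta Q \<longleftrightarrow>
        (x' \<in> F_delta (sm_delta Q) x u \<and> y \<in> H_delta (sm_delta Q) x))"

definition ext :: "(nat \<Rightarrow> 'a) \<Rightarrow> int \<Rightarrow> 'a option" where
  "ext f k = (if k < 0 then None else Some (f (nat k)))"

definition beh :: "('x,'u,'y) sm \<Rightarrow> (int \<Rightarrow> 'y option) set" where
  "beh Q = {w. \<exists>\<mu> \<nu> \<xi>. (\<mu>,\<nu>,\<xi>) \<in> full_beh Q \<and> w = ext \<nu>}"

definition behS :: "('x,'u,'y) sm \<Rightarrow> ((int \<Rightarrow> 'y option) \<times> (int \<Rightarrow> 'x option)) set" where
  "behS Q = {(w,\<xi>'). \<exists>\<mu> \<nu> \<xi>. (\<mu>,\<nu>,\<xi>) \<in> full_beh Q \<and> w = ext \<nu> \<and> \<xi>' = ext \<xi>}"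

definition restr :: "(int \<Rightarrow> 'a) \<Rightarrow> int \<Rightarrow> int \<Rightarrow> 'a list" where
  "restr w t1 t2 = map w [t1..t2]"

definition restr_set :: "(int \<Rightarrow> 'a) set \<Rightarrow> int \<Rightarrow> int \<Rightarrow> 'a list set" where
  "restr_set S t1 t2 = (\<lambda>s. restr s t1 t2) ` S"

definition Pi_l :: "nat \<Rightarrow> (int \<Rightarrow> 'a) set \<Rightarrow> 'a list set" where
  "Pi_l l B = (\<Union>k::nat. restr_set B (int k - int l + 1) (int k))"

definition salca :: "('x,'u,'y) sm \<Rightarrow> nat \<Rightarrow> (int \<Rightarrow> 'y option) set" where
  "salca Q l = {w. (\<forall>k<0. w k = None) \<and> (\<forall>k\<ge>0. w k \<in> Some ` sm_Y Q) \<and>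
     restr w (- int l) 0 \<in> restr_set (beh Q) (- int l) 0 \<and>
     (\<forall>k::nat. restr w (int k - int l) (int k) \<in> Pi_l (Suc l) (beh Q))}"

definition Estr :: "('x,'u,'y) sm \<Rightarrow> int \<Rightarrow> int \<Rightarrow> 'x \<Rightarrow> 'y option list set" where
  "Estr Q a b x = {\<zeta>. \<exists>w \<xi> k. (w,\<xi>) \<in> behS Q \<and> \<xi> (int k) = Some x \<and>
                         \<zeta> = restr w (int k + a) (int k + b)}"

definition EI :: "('x,'u,'y) sm \<Rightarrow> nat \<Rightarrow> 'x \<Rightarrow> 'y option list set" where
  "EI Q l x = Estr Q 0 (int l - 1) x"

definition quot :: "('x,'u,'y) sm \<Rightarrow> nat \<Rightarrow> ('y option list set,'u,'y) sm" where
  "quot Q l = \<lparr> sm_X = EI Q l ` sm_X Q, sm_U = sm_U Q, sm_Y = sm_Y Q,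
     sm_delta = {(hx,u,y,hx'). \<exists>x x'. hx = EI Q l x \<and> hx' = EI Q l x' \<and>
                                (x,u,y,x') \<in> sm_delta Q},
     sm_X0 = EI Q l ` sm_X0 Q \<rparr>"

definition domino_consistent :: "('x,'u,'y) sm \<Rightarrow> nat \<Rightarrow> bool" where
  "domino_consistent Q l \<longleftrightarrow>
     (\<forall>\<zeta> \<in> Pi_l (Suc l) (beh Q). \<forall>hy \<in> sm_X (quot Q l).
        take l \<zeta> \<in> hy \<longrightarrow>
        (\<exists>x \<in> sm_X Q. EI Q l x = hy \<and> \<zeta> \<in> Estr Q 0 (int l) x))"

end

theory Submission
  imports Defs
begin

text \<open>A run of the quotient machine passes through classes \<open>E^[0,l-1](x)\<close>. Any two states of a
  class can emit the same strings of length \<open>l\<close>, so a transition out of one representative can be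
  glued to a trajectory through another; by induction every window of length \<open>l + 1\<close> of the
  output is emitted by a genuine trajectory of \<open>Q\<close>, and the first \<open>l\<close> symbols by one that starts
  in an initial state. Conversely, for a signal all of whose windows of length \<open>l + 1\<close> occur in
  \<open>B(Q)\<close>, domino consistency provides, inside the current class, a state that emits the whole next
  window; its successor emits the next \<open>l\<close> symbols, and iterating this builds a run of the
  quotient machine with the given output.\<close>

lemma restr_conv_map_length: "restr w a (a + int n - 1) = map (\<lambda>i. w (a + int i)) [0..<n]"
  unfolding restr_def by (rule nth_equalityI) auto

lemma ext_add: "ext f (int k + int i) = Some (f (k + i))"
  by (simp add: ext_def flip: of_nat_add)

lemma ext_of_nat: "ext f (int k) = Some (f k)"
  by (simp add: ext_def)

lemma restr_ext_window: "restr (ext f) (int j) (int j + int n) = map (\<lambda>i. Some (f (j + i))) [0..<Suc n]"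
  using restr_conv_map_length[of "ext f" "int j" "Suc n"] by (simp add: ext_add)

lemma restr_ext_initial_window:
  "restr (ext f) (-1) (int n - 1) = None # map (\<lambda>i. Some (f i)) [0..<n]"
proof -
  have "restr (ext f) (-1) (int n - 1) = map (\<lambda>i. ext f (int i - 1)) [0..<Suc n]"
    using restr_conv_map_length[of "ext f" "-1" "Suc n"] by simp
  also have "\<dots> = None # map (\<lambda>i. Some (f i)) [0..<n]"
    by (rule nth_equalityI) (auto simp: ext_def nth_Cons' nat_diff_distrib' simp del: upt_Suc)
  finally show ?thesis .
qed

lemma restr_ext_cong:
  assumes "\<forall>i<n. f i = g i" and "b < int n"
  shows "restr (ext f) a b = restr (ext g) a b"
  unfolding restr_def using assms by (auto simp: ext_def nat_less_iff intro!: map_cong)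

text \<open>In the paper's notation, \<open>emits Q x n f\<close> says \<open>f 0 \<cdots> f (n - 1) \<in> E^[0,n-1](x)\<close>
  (lemma \<open>Estr_map_Some_iff\<close>).\<close>

definition emits :: "('x,'u,'y) sm \<Rightarrow> 'x \<Rightarrow> nat \<Rightarrow> (nat \<Rightarrow> 'y) \<Rightarrow> bool" where
  "emits Q x n f \<longleftrightarrow>
     (\<exists>\<mu> \<nu> \<xi> t. (\<mu>,\<nu>,\<xi>) \<in> full_beh Q \<and> \<xi> t = x \<and> (\<forall>i<n. \<nu> (t + i) = f i))"

lemma emits_trajectory: "(\<mu>,\<nu>,\<xi>) \<in> full_beh Q \<Longrightarrow> emits Q (\<xi> t) n (\<lambda>i. \<nu> (t + i))"
  unfolding emits_def by blast

lemma emits_cong: "(\<And>i. i < n \<Longrightarrow> f i = g i) \<Longrightarrow> emits Q x n f = emits Q x n g"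
  unfolding emits_def by auto

lemma emits_mono: "emits Q x n f \<Longrightarrow> m \<le> n \<Longrightarrow> emits Q x m f"
  unfolding emits_def by fastforce

lemma emits_in_states: "emits Q x n f \<Longrightarrow> x \<in> sm_X Q"
  unfolding emits_def full_beh_def by blast

lemma emits_zero: "live_reachable Q \<Longrightarrow> x \<in> sm_X Q \<Longrightarrow> emits Q x 0 f"
  unfolding emits_def live_reachable_def by blast

lemma Estr_map_Some_iff:
  "map (\<lambda>i. Some (f i)) [0..<n] \<in> Estr Q 0 (int n - 1) x \<longleftrightarrow> emits Q x n f"
proof
  assume "map (\<lambda>i. Some (f i)) [0..<n] \<in> Estr Q 0 (int n - 1) x"
  then obtain \<mu> \<nu> \<xi> t where tr: "(\<mu>,\<nu>,\<xi>) \<in> full_beh Q" and "ext \<xi> (int t) = Some x"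
    and "map (\<lambda>i. Some (f i)) [0..<n] = restr (ext \<nu>) (int t) (int t + int n - 1)"
    unfolding Estr_def behS_def by (auto simp: add_diff_eq)
  then have "\<xi> t = x" and "\<forall>i<n. \<nu> (t + i) = f i"
    by (auto simp: ext_of_nat restr_conv_map_length ext_add map_eq_conv)
  with tr show "emits Q x n f" unfolding emits_def by blast
next
  assume "emits Q x n f"
  then obtain \<mu> \<nu> \<xi> t where tr: "(\<mu>,\<nu>,\<xi>) \<in> full_beh Q" and "\<xi> t = x"
    and "\<forall>i<n. \<nu> (t + i) = f i"
    unfolding emits_def by blast
  then have "ext \<xi> (int t) = Some x"
    and "map (\<lambda>i. Some (f i)) [0..<n] = restr (ext \<nu>) (int t + 0) (int t + (int n - 1))"
    by (auto simp: ext_of_nat restr_conv_map_length ext_add add_diff_eq)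
  moreover have "(ext \<nu>, ext \<xi>) \<in> behS Q" using tr unfolding behS_def by blast
  ultimately show "map (\<lambda>i. Some (f i)) [0..<n] \<in> Estr Q 0 (int n - 1) x"
    unfolding Estr_def by blast
qed

lemma emits_transfer:
  assumes "EI Q l a = EI Q l b" and "m \<le> l" and "emits Q a m f"
  shows "emits Q b m f"
proof -
  obtain \<mu> \<nu> \<xi> t where tr: "(\<mu>,\<nu>,\<xi>) \<in> full_beh Q" and "\<xi> t = a"
    and agree: "\<forall>i<m. \<nu> (t + i) = f i"
    using assms(3) unfolding emits_def by blast
  then have "emits Q a l (\<lambda>i. \<nu> (t + i))" using emits_trajectory by blast
  then have "emits Q b l (\<lambda>i. \<nu> (t + i))"
    using assms(1) by (simp add: EI_def flip: Estr_map_Some_iff)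
  then have "emits Q b m (\<lambda>i. \<nu> (t + i))" using assms(2) by (rule emits_mono)
  then show ?thesis using agree by (simp cong: emits_cong)
qed

lemma emits_Suc:
  assumes "emits Q x (Suc n) f"
  obtains u x' where "(x, u, f 0, x') \<in> sm_delta Q" and "emits Q x' n (\<lambda>i. f (Suc i))"
proof -
  obtain \<mu> \<nu> \<xi> t where tr: "(\<mu>,\<nu>,\<xi>) \<in> full_beh Q" and x: "\<xi> t = x"
    and agree: "\<forall>i<Suc n. \<nu> (t + i) = f i"
    using assms unfolding emits_def by blast
  have "(\<xi> t, \<mu> t, \<nu> t, \<xi> (Suc t)) \<in> sm_delta Q"
    using tr unfolding full_beh_def by blast
  then have step: "(x, \<mu> t, f 0, \<xi> (Suc t)) \<in> sm_delta Q"
    using x agree by auto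
  have "emits Q (\<xi> (Suc t)) n (\<lambda>i. \<nu> (Suc t + i))"
    by (rule emits_trajectory[OF tr])
  then have "emits Q (\<xi> (Suc t)) n (\<lambda>i. f (Suc i))"
    using agree by (subst (asm) emits_cong[where g = "\<lambda>i. f (Suc i)"]) auto
  with step show thesis by (rule that)
qed

lemma emits_Cons:
  assumes wf: "sm_wf Q" and lr: "live_reachable Q"
    and step: "(x, u, y, x') \<in> sm_delta Q" and cont: "emits Q x' n f"
  shows "emits Q x (Suc n) (case_nat y f)"
proof -
  have "x \<in> sm_X Q" and uy: "u \<in> sm_U Q" "y \<in> sm_Y Q"
    using wf step unfolding sm_wf_def by auto
  then obtain \<mu>1 \<nu>1 \<xi>1 t1 where tr1: "(\<mu>1,\<nu>1,\<xi>1) \<in> full_beh Q" and x: "\<xi>1 t1 = x"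
    using lr unfolding live_reachable_def by blast
  obtain \<mu>2 \<nu>2 \<xi>2 t2 where tr2: "(\<mu>2,\<nu>2,\<xi>2) \<in> full_beh Q" and x': "\<xi>2 t2 = x'"
    and agree: "\<forall>i<n. \<nu>2 (t2 + i) = f i"
    using cont unfolding emits_def by blast
  define \<mu> where "\<mu> i = (if i < t1 then \<mu>1 i else if i = t1 then u else \<mu>2 (i - Suc t1 + t2))" for i
  define \<nu> where "\<nu> i = (if i < t1 then \<nu>1 i else if i = t1 then y else \<nu>2 (i - Suc t1 + t2))" for i
  define \<xi> where "\<xi> i = (if i \<le> t1 then \<xi>1 i else \<xi>2 (i - Suc t1 + t2))" for i
  have "(\<mu>,\<nu>,\<xi>) \<in> full_beh Q"
    unfolding full_beh_def
  proof (clarify, intro conjI allI)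
    show "\<xi> 0 \<in> sm_X0 Q" using tr1 unfolding full_beh_def \<xi>_def by auto
  next
    fix k
    show "\<mu> k \<in> sm_U Q" "\<nu> k \<in> sm_Y Q" "\<xi> k \<in> sm_X Q"
      using tr1 tr2 uy unfolding full_beh_def \<mu>_def \<nu>_def \<xi>_def by auto
    consider "k < t1" | "k = t1" | "t1 < k" by linarith
    then show "(\<xi> k, \<mu> k, \<nu> k, \<xi> (Suc k)) \<in> sm_delta Q"
    proof cases
      case 1
      then show ?thesis using tr1 unfolding full_beh_def \<xi>_def \<mu>_def \<nu>_def by auto
    next
      case 2
      then show ?thesis using step x x' unfolding \<xi>_def \<mu>_def \<nu>_def by auto
    next
      case 3
      then have "Suc k - Suc t1 + t2 = Suc (k - Suc t1 + t2)" by simp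
      then show ?thesis using tr2 3 unfolding full_beh_def \<xi>_def \<mu>_def \<nu>_def by auto
    qed
  qed
  moreover have "\<xi> t1 = x" using x by (simp add: \<xi>_def)
  moreover have "\<forall>i<Suc n. \<nu> (t1 + i) = case_nat y f i"
    using agree by (auto simp: \<nu>_def add.commute split: nat.split)
  ultimately show ?thesis unfolding emits_def by blast
qed

lemma emits_initial_beh:
  assumes "x \<in> sm_X0 Q" and "emits Q x n f"
  obtains \<nu> where "ext \<nu> \<in> beh Q" and "\<forall>i<n. \<nu> i = f i"
proof -
  obtain \<mu> \<nu> \<xi> t where tr: "(\<mu>,\<nu>,\<xi>) \<in> full_beh Q" and "\<xi> t = x"
    and agree: "\<forall>i<n. \<nu> (t + i) = f i"
    using assms(2) unfolding emits_def by blast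
  then have "(\<lambda>i. \<mu> (t + i), \<lambda>i. \<nu> (t + i), \<lambda>i. \<xi> (t + i)) \<in> full_beh Q"
    using assms(1) unfolding full_beh_def by auto
  then have "ext (\<lambda>i. \<nu> (t + i)) \<in> beh Q" unfolding beh_def by blast
  then show thesis using agree by (rule that)
qed

lemma restr_in_Pi_l: "v \<in> B \<Longrightarrow> restr v (int k - int n) (int k) \<in> Pi_l (Suc n) B"
  unfolding Pi_l_def restr_set_def by (rule UN_I[of k]) auto

lemma emits_window_in_Pi_l:
  assumes "emits Q x (Suc n) f"
  shows "map (\<lambda>i. Some (f i)) [0..<Suc n] \<in> Pi_l (Suc n) (beh Q)"
proof -
  obtain \<mu> \<nu> \<xi> t where "(\<mu>,\<nu>,\<xi>) \<in> full_beh Q" and agree: "\<forall>i<Suc n. \<nu> (t + i) = f i"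
    using assms unfolding emits_def by blast
  then have "restr (ext \<nu>) (int (t + n) - int n) (int (t + n)) \<in> Pi_l (Suc n) (beh Q)"
    by (intro restr_in_Pi_l) (auto simp: beh_def)
  moreover have "restr (ext \<nu>) (int (t + n) - int n) (int (t + n)) = map (\<lambda>i. Some (f i)) [0..<Suc n]"
    using restr_ext_window[of \<nu> t n] agree by simp
  ultimately show ?thesis by simp
qed

text \<open>A window that starts with the diamond can only be cut out at the very beginning of a
  behavior, so the symbols after the diamond are emitted from an initial state.\<close>
lemma Pi_l_initial_window:
  assumes "None # map (\<lambda>i. Some (f i)) [0..<n] \<in> Pi_l (Suc n) (beh Q)" and "0 < n"
  obtains x where "x \<in> sm_X0 Q" and "emits Q x n f"
proof -
  obtain k \<mu> \<nu> \<xi> where tr: "(\<mu>,\<nu>,\<xi>) \<in> full_beh Q"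
    and "None # map (\<lambda>i. Some (f i)) [0..<n] = restr (ext \<nu>) (int k - int n) (int k)"
    using assms(1) unfolding Pi_l_def restr_set_def beh_def by auto
  then have entry: "(None # map (\<lambda>i. Some (f i)) [0..<n]) ! i = ext \<nu> (int k - int n + int i)"
    if "i < Suc n" for i
    using that restr_conv_map_length[of "ext \<nu>" "int k - int n" "Suc n"]
    by (simp del: upt_Suc)
  from entry[of 0] have "int k < int n" by (simp add: ext_def split: if_splits)
  moreover from entry[of 1] assms(2) have "0 \<le> int k - int n + 1" by (simp add: ext_def split: if_splits)
  ultimately have k: "int k - int n = -1" by simp
  have "\<forall>i<n. \<nu> (0 + i) = f i"
  proof (intro allI impI)
    fix i assume "i < n"
    with entry[of "Suc i"] k show "\<nu> (0 + i) = f i" by (simp add: ext_def)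
  qed
  then have "emits Q (\<xi> 0) n f"
    using emits_trajectory[OF tr, of 0 n] by (simp cong: emits_cong)
  moreover have "\<xi> 0 \<in> sm_X0 Q" using tr unfolding full_beh_def by blast
  ultimately show thesis using that by blast
qed

lemma full_beh_quot_iff:
  "(\<mu>,\<nu>,h) \<in> full_beh (quot Q l) \<longleftrightarrow>
     h 0 \<in> EI Q l ` sm_X0 Q \<and>
     (\<forall>k. \<mu> k \<in> sm_U Q \<and> \<nu> k \<in> sm_Y Q \<and> h k \<in> EI Q l ` sm_X Q \<and>
          (\<exists>x x'. h k = EI Q l x \<and> h (Suc k) = EI Q l x' \<and> (x, \<mu> k, \<nu> k, x') \<in> sm_delta Q))"
  by (simp add: full_beh_def quot_def)

lemma quot_run_emits:
  assumes wf: "sm_wf Q" and lr: "live_reachable Q"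
    and run: "(\<mu>,\<nu>,h) \<in> full_beh (quot Q l)" and "m \<le> Suc l"
  shows "\<exists>x. h j = EI Q l x \<and> emits Q x m (\<lambda>i. \<nu> (j + i))"
  using \<open>m \<le> Suc l\<close>
proof (induction m arbitrary: j)
  case 0
  have "h j \<in> EI Q l ` sm_X Q" using run by (simp add: full_beh_quot_iff)
  then obtain x where "x \<in> sm_X Q" and "h j = EI Q l x" by blast
  then show ?case using emits_zero[OF lr] by blast
next
  case (Suc m)
  obtain x x' where hj: "h j = EI Q l x" and hSj: "h (Suc j) = EI Q l x'"
    and step: "(x, \<mu> j, \<nu> j, x') \<in> sm_delta Q"
    using run unfolding full_beh_quot_iff by blast
  obtain x'' where "h (Suc j) = EI Q l x''" and "emits Q x'' m (\<lambda>i. \<nu> (Suc j + i))"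
    using Suc.IH[of "Suc j"] Suc.prems by (meson Suc_leD)
  then have "emits Q x' m (\<lambda>i. \<nu> (Suc j + i))"
    using hSj Suc.prems by (auto intro: emits_transfer)
  then have "emits Q x (Suc m) (case_nat (\<nu> j) (\<lambda>i. \<nu> (Suc j + i)))"
    using emits_Cons[OF wf lr step] by blast
  moreover have "case_nat (\<nu> j) (\<lambda>i. \<nu> (Suc j + i)) = (\<lambda>i. \<nu> (j + i))"
    by (auto split: nat.split)
  ultimately show ?case using hj by auto
qed

lemma quot_run_initial_beh:
  assumes wf: "sm_wf Q" and lr: "live_reachable Q"
    and run: "(\<mu>,\<nu>,h) \<in> full_beh (quot Q l)"
  obtains \<nu>0 where "ext \<nu>0 \<in> beh Q" and "\<forall>i<l. \<nu>0 i = \<nu> i"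
proof -
  obtain x0 where x0: "x0 \<in> sm_X0 Q" and "h 0 = EI Q l x0"
    using run by (auto simp: full_beh_quot_iff)
  moreover obtain x where "h 0 = EI Q l x" and "emits Q x l (\<lambda>i. \<nu> (0 + i))"
    using quot_run_emits[OF wf lr run, of l 0] by auto
  ultimately have "emits Q x0 l \<nu>" by (auto intro: emits_transfer)
  with x0 obtain \<nu>0 where "ext \<nu>0 \<in> beh Q" and "\<forall>i<l. \<nu>0 i = \<nu> i"
    by (rule emits_initial_beh)
  then show thesis by (rule that)
qed

lemma beh_quot_subset_salca:
  assumes wf: "sm_wf Q" and lr: "live_reachable Q" and "l \<ge> 1"
  shows "beh (quot Q l) \<subseteq> salca Q l"
proof
  fix w assume "w \<in> beh (quot Q l)"
  then obtain \<mu> \<nu> h where run: "(\<mu>,\<nu>,h) \<in> full_beh (quot Q l)" and w: "w = ext \<nu>"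
    unfolding beh_def by blast
  obtain \<nu>0 where beh0: "ext \<nu>0 \<in> beh Q" and prefix: "\<forall>i<l. \<nu>0 i = \<nu> i"
    by (rule quot_run_initial_beh[OF wf lr run])
  have "restr w (- int l) 0 = restr (ext \<nu>0) (- int l) 0"
    using w \<open>l \<ge> 1\<close> by (simp add: restr_ext_cong[OF prefix])
  then have initial: "restr w (- int l) 0 \<in> restr_set (beh Q) (- int l) 0"
    using beh0 unfolding restr_set_def by blast
  have windows: "restr w (int k - int l) (int k) \<in> Pi_l (Suc l) (beh Q)" for k
  proof (cases "k < l")
    case True
    then have "restr w (int k - int l) (int k) = restr (ext \<nu>0) (int k - int l) (int k)"
      using w by (simp add: restr_ext_cong[OF prefix])
    then show ?thesis using restr_in_Pi_l[OF beh0] by simp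
  next
    case False
    obtain x where "emits Q x (Suc l) (\<lambda>i. \<nu> (k - l + i))"
      using quot_run_emits[OF wf lr run, of "Suc l" "k - l"] by auto
    then have "map (\<lambda>i. Some (\<nu> (k - l + i))) [0..<Suc l] \<in> Pi_l (Suc l) (beh Q)"
      by (rule emits_window_in_Pi_l)
    moreover have "restr w (int k - int l) (int k) = map (\<lambda>i. Some (\<nu> (k - l + i))) [0..<Suc l]"
      using w False restr_ext_window[of \<nu> "k - l" l] by (simp add: of_nat_diff)
    ultimately show ?thesis by simp
  qed
  have "\<forall>k<0. w k = None" and "\<forall>k\<ge>0. w k \<in> Some ` sm_Y Q"
    using w run by (auto simp: ext_def full_beh_quot_iff)
  with initial windows show "w \<in> salca Q l" unfolding salca_def by blast
qed

lemma salca_ext: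
  assumes "w \<in> salca Q l"
  obtains \<nu> where "w = ext \<nu>"
proof
  have "w k = None" if "k < 0" for k using assms that unfolding salca_def by blast
  moreover have "w k \<in> Some ` sm_Y Q" if "k \<ge> 0" for k using assms that unfolding salca_def by blast
  ultimately show "w = ext (\<lambda>k. the (w (int k)))"
    unfolding ext_def fun_eq_iff by (metis image_iff nat_0_le not_le option.sel)
qed

lemma domino_step:
  assumes dc: "domino_consistent Q l"
    and window: "map (\<lambda>i. Some (f i)) [0..<Suc l] \<in> Pi_l (Suc l) (beh Q)"
    and "emits Q x l f"
  obtains x' u x'' where "EI Q l x' = EI Q l x" and "(x', u, f 0, x'') \<in> sm_delta Q"
    and "emits Q x'' l (\<lambda>i. f (Suc i))"
proof -
  define \<zeta> where "\<zeta> = map (\<lambda>i. Some (f i)) [0..<Suc l]"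
  have "take l \<zeta> \<in> EI Q l x"
    using \<open>emits Q x l f\<close> by (simp add: \<zeta>_def take_map EI_def Estr_map_Some_iff)
  moreover have "EI Q l x \<in> sm_X (quot Q l)"
    using emits_in_states[OF \<open>emits Q x l f\<close>] by (simp add: quot_def)
  ultimately obtain x' where x': "EI Q l x' = EI Q l x" and "\<zeta> \<in> Estr Q 0 (int l) x'"
    using dc window unfolding domino_consistent_def \<zeta>_def by blast
  then have "emits Q x' (Suc l) f"
    using Estr_map_Some_iff[of f "Suc l" Q x'] by (simp add: \<zeta>_def)
  then obtain u x'' where "(x', u, f 0, x'') \<in> sm_delta Q" and "emits Q x'' l (\<lambda>i. f (Suc i))"
    by (rule emits_Suc)
  with x' show thesis by (rule that)
qed

lemma beh_quotI:
  assumes wf: "sm_wf Q" and "s 0 \<in> sm_X0 Q"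
    and steps: "\<forall>k. \<exists>x' u. EI Q l x' = EI Q l (s k) \<and> (x', u, \<nu> k, s (Suc k)) \<in> sm_delta Q"
  shows "ext \<nu> \<in> beh (quot Q l)"
proof -
  obtain x' \<mu> where step: "\<And>k. EI Q l (x' k) = EI Q l (s k)"
    "\<And>k. (x' k, \<mu> k, \<nu> k, s (Suc k)) \<in> sm_delta Q"
    using steps by metis
  have "s k \<in> sm_X Q" for k
    using \<open>s 0 \<in> sm_X0 Q\<close> step(2)[of "k - 1"] wf unfolding sm_wf_def by (cases k) auto
  then have "(\<mu>, \<nu>, \<lambda>k. EI Q l (s k)) \<in> full_beh (quot Q l)"
    using \<open>s 0 \<in> sm_X0 Q\<close> step wf unfolding full_beh_quot_iff sm_wf_def by blast
  then show ?thesis unfolding beh_def by blast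
qed

lemma salca_subset_beh_quot:
  assumes wf: "sm_wf Q" and "l \<ge> 1" and dc: "domino_consistent Q l"
  shows "salca Q l \<subseteq> beh (quot Q l)"
proof
  fix w assume w: "w \<in> salca Q l"
  then obtain \<nu> where w_eq: "w = ext \<nu>" by (rule salca_ext)
  have windows: "restr (ext \<nu>) (int k - int l) (int k) \<in> Pi_l (Suc l) (beh Q)" for k
    using w w_eq unfolding salca_def by blast
  have next_window: "map (\<lambda>i. Some (\<nu> (k + i))) [0..<Suc l] \<in> Pi_l (Suc l) (beh Q)" for k
    using windows[of "k + l"] restr_ext_window[of \<nu> k l] by simp
  \<comment> \<open>The window ending at time \<open>l - 1\<close> already pins down the start of a behavior.\<close>
  have "None # map (\<lambda>i. Some (\<nu> i)) [0..<l] \<in> Pi_l (Suc l) (beh Q)"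
    using windows[of "l - 1"] restr_ext_initial_window[of \<nu> l] \<open>l \<ge> 1\<close> by (simp add: of_nat_diff)
  then obtain x0 where "x0 \<in> sm_X0 Q" and "emits Q x0 l \<nu>"
    using \<open>l \<ge> 1\<close> by (elim Pi_l_initial_window) auto
  define P where "P k x \<longleftrightarrow> emits Q x l (\<lambda>i. \<nu> (k + i)) \<and> (k = 0 \<longrightarrow> x \<in> sm_X0 Q)" for k x
  have "\<exists>s. \<forall>k. P k (s k) \<and>
          (\<exists>x' u. EI Q l x' = EI Q l (s k) \<and> (x', u, \<nu> k, s (Suc k)) \<in> sm_delta Q)"
  proof (rule dependent_nat_choice)
    show "\<exists>x. P 0 x" using \<open>x0 \<in> sm_X0 Q\<close> \<open>emits Q x0 l \<nu>\<close> unfolding P_def by auto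
  next
    fix x k assume "P k x"
    then have "emits Q x l (\<lambda>i. \<nu> (k + i))" unfolding P_def by blast
    then obtain x' u x'' where "EI Q l x' = EI Q l x" "(x', u, \<nu> (k + 0), x'') \<in> sm_delta Q"
      "emits Q x'' l (\<lambda>i. \<nu> (k + Suc i))"
      by (rule domino_step[OF dc next_window])
    then show "\<exists>y. P (Suc k) y \<and>
        (\<exists>x' u. EI Q l x' = EI Q l x \<and> (x', u, \<nu> k, y) \<in> sm_delta Q)"
      unfolding P_def by auto
  qed
  then obtain s where "s 0 \<in> sm_X0 Q"
    and "\<forall>k. \<exists>x' u. EI Q l x' = EI Q l (s k) \<and> (x', u, \<nu> k, s (Suc k)) \<in> sm_delta Q"
    unfolding P_def by auto
  then show "w \<in> beh (quot Q l)" using w_eq beh_quotI[OF wf] by blast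
qed

theorem corollary10:
  fixes Q :: "('x,'u,'y) sm" and l :: nat
  assumes "standing_assumptions Q"
    and "l \<ge> 1"
    and "domino_consistent Q l"
  shows "beh (quot Q l) = salca Q l"
proof -
  have "sm_wf Q" and "live_reachable Q"
    using assms(1) unfolding standing_assumptions_def by auto
  with assms(2,3) show ?thesis
    by (intro equalityI beh_quot_subset_salca salca_subset_beh_quot)
qed

end
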